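(* Let $n \equiv 0 \pmod 4$ and let $C$ be a self-dual binary linear $(n,k,d)$-code. If $G$ is a generator matrix of $C$ in standard form, then the number of rows of $G$ whose weight is singly-even (i.e. congruent to $2 \bmod 4$) is even.
   Context: A binary linear $(n,k,d)$-code is a $k$-dimensional subspace of $\mathbb{F}_2^n$ with minimum distance $d$. For $x,y\in\mathbb{F}_2^n$ the inner product is $\sum_i x_iy_i \in \mathbb{F}_2$; the dual code is $C^{\perp}=\{c\in\mathbb{F}_2^n : c\cdot x=0 \ \forall x\in C\}$, and $C$ is self-dual if $C=C^{\perp}$ (so $k=n/2$). A generator matrix is in standard form if it equals $(I_k \mid A)$ with $I_k$ the $k\times k$ identity matrix and $A$ a $k\times k$ binary matrix. The weight $w(x)$ of a vector is its number of nonzero coordinates; $x$ is singly-even if $w(x)\equiv 2 \pmod 4$ and doubly-even if $w(x)\equiv 0\pmod 4$. *)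

theory Defs
  imports Main
begin

text \<open>Binary vectors of length n are modelled as functions nat => bool (True = 1 in F_2)
  that vanish outside the index set {0..<n}. Addition in F_2^n is pointwise xor.\<close>

definition bvecs :: "nat \<Rightarrow> (nat \<Rightarrow> bool) set" where
  "bvecs n = {x. \<forall>i. n \<le> i \<longrightarrow> \<not> x i}"

definition bzero :: "nat \<Rightarrow> bool" where
  "bzero = (\<lambda>i. False)"

definition badd :: "(nat \<Rightarrow> bool) \<Rightarrow> (nat \<Rightarrow> bool) \<Rightarrow> (nat \<Rightarrow> bool)" where
  "badd x y = (\<lambda>i. x i \<noteq> y i)"

definition bweight :: "nat \<Rightarrow> (nat \<Rightarrow> bool) \<Rightarrow> nat" where
  "bweight n x = card {i. i < n \<and> x i}"

definition binner :: "nat \<Rightarrow> (nat \<Rightarrow> bool) \<Rightarrow> (nat \<Rightarrow> bool) \<Rightarrow> bool" where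
  "binner n x y = odd (card {i. i < n \<and> x i \<and> y i})"

text \<open>A binary linear code of length n: an F_2-subspace of F_2^n
  (over F_2, a subspace is a subset containing 0 and closed under addition).\<close>
definition binary_linear_code :: "nat \<Rightarrow> (nat \<Rightarrow> bool) set \<Rightarrow> bool" where
  "binary_linear_code n C \<longleftrightarrow> C \<subseteq> bvecs n \<and> bzero \<in> C \<and> (\<forall>x\<in>C. \<forall>y\<in>C. badd x y \<in> C)"

definition dual_code :: "nat \<Rightarrow> (nat \<Rightarrow> bool) set \<Rightarrow> (nat \<Rightarrow> bool) set" where
  "dual_code n C = {c \<in> bvecs n. \<forall>x\<in>C. \<not> binner n c x}"

definition self_dual :: "nat \<Rightarrow> (nat \<Rightarrow> bool) set \<Rightarrow> bool" where
  "self_dual n C \<longleftrightarrow> binary_linear_code n C \<and> C = dual_code n C"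

definition row_comb :: "(nat \<Rightarrow> nat \<Rightarrow> bool) \<Rightarrow> nat set \<Rightarrow> (nat \<Rightarrow> bool)" where
  "row_comb G S = (\<lambda>j. odd (card {i \<in> S. G i j}))"

definition generator_matrix :: "nat \<Rightarrow> nat \<Rightarrow> (nat \<Rightarrow> bool) set \<Rightarrow> (nat \<Rightarrow> nat \<Rightarrow> bool) \<Rightarrow> bool" where
  "generator_matrix n k C G \<longleftrightarrow>
     (\<forall>i<k. G i \<in> bvecs n) \<and>
     (\<forall>S. S \<subseteq> {..<k} \<longrightarrow> row_comb G S = bzero \<longrightarrow> S = {}) \<and>
     C = {row_comb G S | S. S \<subseteq> {..<k}}"

text \<open>Standard form (I_k | A) with A a k x k matrix (so n = 2k).\<close>
definition standard_form :: "nat \<Rightarrow> nat \<Rightarrow> (nat \<Rightarrow> nat \<Rightarrow> bool) \<Rightarrow> bool" where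
  "standard_form n k G \<longleftrightarrow> n = 2 * k \<and> (\<forall>i<k. \<forall>j<k. G i j = (i = j))"

end

theory Submission
  imports Defs
begin

text \<open>Since the code is self-orthogonal, every codeword has even weight, so the all-ones vector
  is orthogonal to the code and hence a codeword. In standard form it must be the sum of all
  rows. For orthogonal x, y the overlap of x and y has even size, so
  w(x + y) = w(x) + w(y) - 2|x \<and> y| \<equiv> w(x) + w(y) (mod 4); hence
  n = w(1) \<equiv> \<Sum> w(G i) (mod 4). All row weights are even, so modulo 4 this sum is twice the
  number of singly-even rows, and n \<equiv> 0 (mod 4) forces that number to be even.\<close>

lemma bweight_badd:
  "bweight n (badd x y) + 2 * card {i. i < n \<and> x i \<and> y i} = bweight n x + bweight n y"
proof -
  let ?A = "{i. i < n \<and> x i}" and ?B = "{i. i < n \<and> y i}"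
  have "bweight n (badd x y) = card ((?A - ?B) \<union> (?B - ?A))"
    unfolding bweight_def badd_def by (rule arg_cong[where f = card]) blast
  also have "\<dots> = card (?A - ?B) + card (?B - ?A)"
    by (rule card_Un_disjoint) auto
  finally have "bweight n (badd x y) = card (?A - ?B) + card (?B - ?A)" .
  moreover have "card {i. i < n \<and> x i \<and> y i} = card (?A \<inter> ?B)"
    by (rule arg_cong[where f = card]) blast
  moreover have "card (?A - ?B) + card (?A \<inter> ?B) = card ?A"
    and "card (?B - ?A) + card (?A \<inter> ?B) = card ?B"
    by (simp_all add: card_Diff_subset_Int Int_commute le_add_diff_inverse2 card_mono)
  ultimately show ?thesis
    unfolding bweight_def by linarith
qed

lemma binner_self: "binner n x x = odd (bweight n x)"
  by (simp add: binner_def bweight_def)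

lemma binner_badd_right:
  "binner n x (badd y z) \<longleftrightarrow> binner n x y \<noteq> binner n x z"
proof -
  have "bweight n (badd (\<lambda>i. x i \<and> y i) (\<lambda>i. x i \<and> z i))
      = card {i. i < n \<and> x i \<and> badd y z i}"
    unfolding bweight_def badd_def by (rule arg_cong[where f = card]) blast
  then have "card {i. i < n \<and> x i \<and> badd y z i} + 2 * card {i. i < n \<and> x i \<and> y i \<and> z i}
      = card {i. i < n \<and> x i \<and> y i} + card {i. i < n \<and> x i \<and> z i}"
    using bweight_badd[of n "\<lambda>i. x i \<and> y i" "\<lambda>i. x i \<and> z i"]
    by (simp add: bweight_def conj_ac)
  moreover have "odd a \<longleftrightarrow> odd b \<noteq> odd c" if "a + 2 * d = b + c" for a b c d :: nat
    using that by presburger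
  ultimately show ?thesis
    unfolding binner_def by blast
qed

lemma row_comb_empty: "row_comb G {} = bzero"
  by (simp add: row_comb_def bzero_def)

lemma row_comb_singleton: "row_comb G {a} = G a"
  by (rule ext) (simp add: row_comb_def Collect_conv_if)

lemma row_comb_insert:
  assumes "finite T" "a \<notin> T"
  shows "row_comb G (insert a T) = badd (G a) (row_comb G T)"
proof
  fix j
  have "{i \<in> insert a T. G i j} = (if G a j then insert a {i \<in> T. G i j} else {i \<in> T. G i j})"
    by auto
  then show "row_comb G (insert a T) j = badd (G a) (row_comb G T) j"
    using assms by (simp add: row_comb_def badd_def)
qed

lemma binner_row_comb_right:
  assumes "finite T"
  shows "binner n x (row_comb G T) \<longleftrightarrow> odd (card {i \<in> T. binner n x (G i)})"
  using assms
proof (induction T rule: finite_induct)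
  case empty
  then show ?case
    by (simp add: row_comb_empty binner_def bzero_def)
next
  case (insert a T)
  have "{i \<in> insert a T. binner n x (G i)}
      = (if binner n x (G a) then insert a {i \<in> T. binner n x (G i)} else {i \<in> T. binner n x (G i)})"
    by auto
  with insert show ?case
    by (simp add: row_comb_insert binner_badd_right)
qed

lemma bweight_row_comb_mod_4:
  assumes "finite T" "\<forall>i\<in>T. \<forall>j\<in>T. \<not> binner n (G i) (G j)"
  shows "bweight n (row_comb G T) mod 4 = (\<Sum>i\<in>T. bweight n (G i)) mod 4"
  using assms
proof (induction T rule: finite_induct)
  case empty
  then show ?case
    by (simp add: row_comb_empty bweight_def bzero_def)
next
  case (insert a T)
  have no_overlap: "{i \<in> T. binner n (G a) (G i)} = {}"
    using insert.prems by auto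
  have "\<not> binner n (G a) (row_comb G T)"
    unfolding binner_row_comb_right[OF insert.hyps(1)] no_overlap by simp
  then obtain m where m: "card {i. i < n \<and> G a i \<and> row_comb G T i} = 2 * m"
    unfolding binner_def by blast
  have "bweight n (row_comb G (insert a T)) mod 4
      = (bweight n (G a) + bweight n (row_comb G T)) mod 4"
    using bweight_badd[of n "G a" "row_comb G T"] m insert.hyps
    by (simp add: row_comb_insert) (metis mod_mult_self2)
  also have "\<dots> = (bweight n (G a) + (\<Sum>i\<in>T. bweight n (G i))) mod 4"
    using insert.IH insert.prems by (metis insert_iff mod_add_right_eq)
  also have "\<dots> = (\<Sum>i\<in>insert a T. bweight n (G i)) mod 4"
    using insert.hyps by simp
  finally show ?case .
qed

lemma sum_even_mod_4:
  fixes f :: "'a \<Rightarrow> nat"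
  assumes "finite S" "\<forall>i\<in>S. even (f i)"
  shows "(\<Sum>i\<in>S. f i) mod 4 = 2 * card {i \<in> S. f i mod 4 = 2} mod 4"
proof -
  have "(\<Sum>i\<in>S. f i) mod 4 = (\<Sum>i\<in>S. f i mod 4) mod 4"
    by (simp add: mod_sum_eq)
  also have "(\<Sum>i\<in>S. f i mod 4) = (\<Sum>i\<in>S. if f i mod 4 = 2 then 2 else 0)"
  proof (rule sum.cong)
    fix i assume "i \<in> S"
    with assms(2) have "even (f i)" by blast
    then show "f i mod 4 = (if f i mod 4 = 2 then 2 else 0)" by presburger
  qed simp
  also have "\<dots> = 2 * card {i \<in> S. f i mod 4 = 2}"
    using assms(1) by (simp add: sum.If_cases Int_def)
  finally show ?thesis .
qed

lemma self_dual_orthogonal: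
  assumes "self_dual n C" "x \<in> C" "y \<in> C"
  shows "\<not> binner n x y"
  using assms unfolding self_dual_def dual_code_def by blast

lemma self_dual_even_bweight:
  assumes "self_dual n C" "x \<in> C"
  shows "even (bweight n x)"
  using self_dual_orthogonal[OF assms assms(2)] by (simp add: binner_self)

lemma self_dual_all_ones:
  assumes "self_dual n C"
  shows "(\<lambda>i. i < n) \<in> C"
proof -
  have "\<not> binner n (\<lambda>i. i < n) x" if "x \<in> C" for x
    using self_dual_even_bweight[OF assms that] by (simp add: binner_def bweight_def)
  then have "(\<lambda>i. i < n) \<in> dual_code n C"
    by (simp add: dual_code_def bvecs_def)
  with assms show ?thesis
    unfolding self_dual_def by simp
qed

lemma generator_matrix_row_comb:
  assumes "generator_matrix n k C G" "S \<subseteq> {..<k}"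
  shows "row_comb G S \<in> C"
  using assms unfolding generator_matrix_def by blast

lemma generator_matrix_row:
  assumes "generator_matrix n k C G" "a < k"
  shows "G a \<in> C"
  using generator_matrix_row_comb[OF assms(1), of "{a}"] assms(2)
  by (simp add: row_comb_singleton)

lemma standard_form_row_comb_info_set:
  assumes "standard_form n k G" "S \<subseteq> {..<k}" "j < k"
  shows "row_comb G S j \<longleftrightarrow> j \<in> S"
proof -
  have "{i \<in> S. G i j} = S \<inter> {j}"
    using assms unfolding standard_form_def by auto
  then show ?thesis
    by (simp add: row_comb_def Int_insert_right)
qed

lemma standard_form_all_ones_row_comb:
  assumes "standard_form n k G" "S \<subseteq> {..<k}" "row_comb G S = (\<lambda>i. i < n)"
  shows "S = {..<k}"
proof (rule subset_antisym)
  show "{..<k} \<subseteq> S"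
  proof
    fix j assume "j \<in> {..<k}"
    moreover have "n = 2 * k"
      using assms(1) unfolding standard_form_def by simp
    ultimately have "row_comb G S j"
      using assms(3) by simp
    with \<open>j \<in> {..<k}\<close> show "j \<in> S"
      using standard_form_row_comb_info_set[OF assms(1,2)] by simp
  qed
qed (rule assms(2))

theorem mainTheorem1:
  fixes n k :: nat and C :: "(nat \<Rightarrow> bool) set" and G :: "nat \<Rightarrow> nat \<Rightarrow> bool"
  assumes "n mod 4 = 0"
    and "self_dual n C"
    and "generator_matrix n k C G"
    and "standard_form n k G"
  shows "even (card {i. i < k \<and> bweight n (G i) mod 4 = 2})"
proof -
  obtain S where S: "S \<subseteq> {..<k}" and ones: "row_comb G S = (\<lambda>i. i < n)"
    using self_dual_all_ones[OF assms(2)] assms(3) unfolding generator_matrix_def by auto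
  then have "S = {..<k}"
    using standard_form_all_ones_row_comb[OF assms(4)] by blast
  have rows: "G i \<in> C" if "i < k" for i
    using generator_matrix_row[OF assms(3) that] .
  have "(\<Sum>i<k. bweight n (G i)) mod 4 = bweight n (row_comb G {..<k}) mod 4"
    using bweight_row_comb_mod_4[of "{..<k}" n G] self_dual_orthogonal[OF assms(2)] rows by simp
  also have "\<dots> = bweight n (\<lambda>i. i < n) mod 4"
    using ones \<open>S = {..<k}\<close> by simp
  also have "\<dots> = 0"
    using assms(1) by (simp add: bweight_def)
  finally have "2 * card {i \<in> {..<k}. bweight n (G i) mod 4 = 2} mod 4 = 0"
    using sum_even_mod_4[of "{..<k}" "\<lambda>i. bweight n (G i)"]
      self_dual_even_bweight[OF assms(2)] rows by simp
  then show ?thesis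
    by (simp add: Collect_conj_eq lessThan_def) presburger
qed

end
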